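(* Let $e$ be an environment with binary treatment $T^e$ and covariates $X^e$. Let $\Phi(T,X)$ be a representation, and define the covariate representation $$\Phi(X^e)=\{\Phi(1,X^e),\Phi(0,X^e)\}.$$ Let $\epsilon>0$. Suppose that $\epsilon \le P(T^e=1\mid X^e)\le 1-\epsilon$ with probability 1. Then $\epsilon\le P(T^e=1\mid \Phi(X^e))\le 1-\epsilon$ with probability 1.
   Context: A representation is a (measurable) function $\Phi(T,X)$ of the treatment and the covariates. *)

theory Defs
  imports "HOL-Probability.Probability"
begin

definition cond_prob_treat ::
  "'a measure \<Rightarrow> ('a \<Rightarrow> bool) \<Rightarrow> ('a \<Rightarrow> 'b) \<Rightarrow> 'b measure \<Rightarrow> 'a \<Rightarrow> real" where
  "cond_prob_treat M T Y N =
     real_cond_exp M (vimage_algebra (space M) Y N) (\<lambda>\<omega>. if T \<omega> then 1 else 0)"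

text \<open>Covariate representation Phi(X) = (Phi(1,X), Phi(0,X)), treatment 1 = True, 0 = False.\<close>
definition cov_rep :: "(bool \<times> 'x \<Rightarrow> 'r) \<Rightarrow> ('a \<Rightarrow> 'x) \<Rightarrow> 'a \<Rightarrow> 'r \<times> 'r" where
  "cov_rep \<Phi> X = (\<lambda>\<omega>. (\<Phi> (True, X \<omega>), \<Phi> (False, X \<omega>)))"

end

theory Submission
  imports Defs
begin

text \<open>Since \<open>\<Phi>(X)\<close> is a function of \<open>X\<close>, its sigma-algebra is coarser than that of \<open>X\<close>.
  By the tower property, \<open>P(T = 1 | \<Phi>(X)) = E[P(T = 1 | X) | \<Phi>(X)]\<close>, and conditional
  expectation preserves almost sure constant bounds.\<close>

context sigma_finite_subalgebra
begin

lemma real_cond_exp_nested_subalg_bounds: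
  assumes "subalgebra M G" "subalgebra G F" "integrable M f"
    and "AE x in M. a \<le> real_cond_exp M G f x \<and> real_cond_exp M G f x \<le> b"
  shows "AE x in M. a \<le> real_cond_exp M F f x \<and> real_cond_exp M F f x \<le> b"
proof -
  have "integrable M (real_cond_exp M G f)"
    using sigma_finite_subalgebra.real_cond_exp_int(1)[OF nested_subalg_is_sigma_finite] assms(1-3) .
  moreover have "AE x in M. a \<le> real_cond_exp M G f x" "AE x in M. real_cond_exp M G f x \<le> b"
    using assms(4) by auto
  ultimately have "AE x in M. a \<le> real_cond_exp M F (real_cond_exp M G f) x"
    and "AE x in M. real_cond_exp M F (real_cond_exp M G f) x \<le> b"
    by (simp_all add: real_cond_exp_ge_c real_cond_exp_le_c)
  moreover have "AE x in M. real_cond_exp M F (real_cond_exp M G f) x = real_cond_exp M F f x"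
    using assms(1-3) by (rule real_cond_exp_nested_subalg)
  ultimately show ?thesis
    by eventually_elim simp
qed

end

lemma subalgebra_vimage_algebra:
  assumes "f \<in> measurable N M" "space N = X"
  shows "subalgebra N (vimage_algebra X f M)"
  using sets_image_in_sets[OF assms(2,1)] assms(2) by (simp add: subalgebra_def)

lemma measurable_cov_rep:
  assumes "X \<in> measurable G N" "\<Phi> \<in> measurable (count_space UNIV \<Otimes>\<^sub>M N) R"
  shows "cov_rep \<Phi> X \<in> measurable G (R \<Otimes>\<^sub>M R)"
proof -
  have component: "(\<lambda>\<omega>. \<Phi> (t, X \<omega>)) \<in> measurable G R" for t
    using assms by (auto intro!: measurable_compose[OF _ assms(2)])
  show ?thesis
    unfolding cov_rep_def by (rule measurable_Pair[OF component component])
qed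

theorem theorem2:
  fixes M :: "'a measure" and T :: "'a \<Rightarrow> bool" and X :: "'a \<Rightarrow> 'x"
    and N :: "'x measure" and R :: "'r measure"
    and \<Phi> :: "bool \<times> 'x \<Rightarrow> 'r" and \<epsilon> :: real
  assumes "prob_space M"
    and "T \<in> measurable M (count_space UNIV)"
    and "X \<in> measurable M N"
    and "\<Phi> \<in> measurable (count_space UNIV \<Otimes>\<^sub>M N) R"
    and "\<epsilon> > 0"
    and "AE \<omega> in M. \<epsilon> \<le> cond_prob_treat M T X N \<omega> \<and> cond_prob_treat M T X N \<omega> \<le> 1 - \<epsilon>"
  shows "AE \<omega> in M. \<epsilon> \<le> cond_prob_treat M T (cov_rep \<Phi> X) (R \<Otimes>\<^sub>M R) \<omega>
                   \<and> cond_prob_treat M T (cov_rep \<Phi> X) (R \<Otimes>\<^sub>M R) \<omega> \<le> 1 - \<epsilon>"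
proof -
  interpret prob_space M by fact
  define G where "G = vimage_algebra (space M) X N"
  define F where "F = vimage_algebra (space M) (cov_rep \<Phi> X) (R \<Otimes>\<^sub>M R)"
  have "subalgebra M F"
    unfolding F_def using assms(3,4) by (auto intro: subalgebra_vimage_algebra measurable_cov_rep)
  then interpret finite_measure_subalgebra M F
    by unfold_locales
  have "subalgebra M G"
    unfolding G_def using assms(3) by (rule subalgebra_vimage_algebra) simp
  moreover have "subalgebra G F"
  proof -
    have "X \<in> measurable G N"
      unfolding G_def using assms(3) by (intro measurable_vimage_algebra1) (simp add: measurable_def)
    then show ?thesis
      unfolding F_def using assms(4) by (auto simp: G_def intro: subalgebra_vimage_algebra measurable_cov_rep)
  qed
  moreover have "integrable M (\<lambda>\<omega>. if T \<omega> then 1 else 0 :: real)"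
    using assms(2) by (intro integrable_const_bound[where B = 1]) auto
  ultimately show ?thesis
    using assms(6) unfolding cond_prob_treat_def G_def[symmetric] F_def[symmetric]
    by (rule real_cond_exp_nested_subalg_bounds)
qed

end
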